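(* Let $D\ge 2$, let $\eta=\mathrm{diag}(-1,1,\dots,1)$ be the $D\times D$ Minkowski matrix, and let $M$ be an arbitrary invertible real $D\times D$ matrix. Then $M$ can be written as $M=\lambda s$ with $\lambda$ a real Lorentz matrix (i.e. $\lambda^t\eta\lambda=\eta$) and $s$ a real symmetric matrix if and only if (i) the real matrix $\eta M^t\eta M$ has a real square root, and (ii) at least one such real square root can be written as the product $\eta\, s'$ of $\eta$ with a real symmetric matrix $s'$.
   Context: $m^t$ denotes the transpose of the matrix $m$. A square root of a matrix $A$ is a matrix $\gamma$ with $\gamma^2=A$. *)

theory Defs
  imports "HOL-Analysis.Analysis"
begin

text \<open>The Minkowski metric diag(-1,1,...,1); the distinguished (first) index is the
least element of the (well-ordered, finite) index type.\<close>
definition minkowski :: "(real, 'n::{finite,wellorder}) vec ^ ('n::{finite,wellorder})" where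
  "minkowski = (\<chi> i j. if i = j then (if i = (LEAST k. True) then -1 else 1) else 0)"

definition lorentz_matrix :: "(real, 'n::{finite,wellorder}) vec ^ ('n::{finite,wellorder}) \<Rightarrow> bool" where
  "lorentz_matrix L \<longleftrightarrow> transpose L ** minkowski ** L = minkowski"

definition symmetric_matrix :: "real^'n^'n \<Rightarrow> bool" where
  "symmetric_matrix S \<longleftrightarrow> transpose S = S"

end

theory Submission
  imports Defs
begin

text \<open>If \<open>M = \<lambda> s\<close> with \<open>\<lambda>\<^sup>t \<eta> \<lambda> = \<eta>\<close> and \<open>s\<close> symmetric, then
  \<open>\<eta> M\<^sup>t \<eta> M = \<eta> s (\<lambda>\<^sup>t \<eta> \<lambda>) s = (\<eta> s)\<^sup>2\<close>.  Conversely, if \<open>(\<eta> s)\<^sup>2 = \<eta> M\<^sup>t \<eta> M\<close>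
  with \<open>s\<close> symmetric, then \<open>s \<eta> s = M\<^sup>t \<eta> M\<close>, which is invertible, so \<open>s\<close> is invertible
  and \<open>\<lambda> = M s\<^sup>-\<^sup>1\<close> satisfies \<open>\<lambda>\<^sup>t \<eta> \<lambda> = s\<^sup>-\<^sup>1 (s \<eta> s) s\<^sup>-\<^sup>1 = \<eta>\<close>.\<close>

lemma minkowski_squared:
  "(minkowski :: real^('n::{finite,wellorder})^('n::{finite,wellorder})) ** minkowski = mat 1"
proof -
  define d :: "'n \<Rightarrow> real" where "d i = (if i = (LEAST k. True) then -1 else 1)" for i
  have diag: "(minkowski :: real^('n::{finite,wellorder})^('n::{finite,wellorder})) = (\<chi> i j. if i = j then d i else 0)"
    unfolding minkowski_def d_def by simp
  have "d i * d i = 1" for i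
    unfolding d_def by simp
  then show ?thesis
    unfolding diag
    by (simp add: matrix_matrix_mult_def mat_def vec_eq_iff if_distrib[of "\<lambda>x. x * _"]
        sum.delta cong: if_cong)
qed

lemma square_of_form_times_symmetric:
  fixes E L S :: "real^'n^'n"
  assumes "transpose L ** E ** L = E" and "transpose S = S"
  shows "(E ** S) ** (E ** S) = E ** transpose (L ** S) ** E ** (L ** S)"
proof -
  have "E ** transpose (L ** S) ** E ** (L ** S) = E ** S ** (transpose L ** E ** L) ** S"
    by (simp add: matrix_transpose_mul assms(2) matrix_mul_assoc)
  then show ?thesis
    by (simp add: assms(1) matrix_mul_assoc)
qed

lemma invertible_if_congruent_form:
  fixes E M S :: "real^'n^'n"
  assumes "S ** E ** S = transpose M ** E ** M" and "invertible E" and "invertible M"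
  shows "invertible S"
proof -
  have "invertible (S ** E ** S)"
    unfolding assms(1) by (intro invertible_mult transpose_invertible assms(2,3))
  then obtain B where "(B ** S ** E) ** S = mat 1"
    using invertible_left_inverse by (metis matrix_mul_assoc)
  then show ?thesis
    using invertible_left_inverse by blast
qed

lemma form_isometry_factor:
  fixes E M S :: "real^'n^'n"
  assumes congruent: "S ** E ** S = transpose M ** E ** M"
    and "transpose S = S" and "invertible E" and "invertible M"
  obtains L where "transpose L ** E ** L = E" and "M = L ** S"
proof -
  obtain K where SK: "S ** K = mat 1" and KS: "K ** S = mat 1"
    using invertible_if_congruent_form[OF congruent assms(3,4)] invertible_def by blast
  have KtS: "transpose K ** S = mat 1"
    using arg_cong[OF SK, of transpose] by (simp add: matrix_transpose_mul assms(2) transpose_mat)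
  have "transpose (M ** K) ** E ** (M ** K) = transpose K ** (transpose M ** E ** M) ** K"
    by (simp add: matrix_transpose_mul matrix_mul_assoc)
  also have "\<dots> = (transpose K ** S) ** E ** (S ** K)"
    by (simp add: congruent[symmetric] matrix_mul_assoc)
  also have "\<dots> = E"
    by (simp add: KtS SK)
  finally show ?thesis
    using that[of "M ** K"] by (simp add: matrix_mul_assoc[symmetric] KS)
qed

theorem proposition1:
  fixes M :: "(real, 'n::{finite,wellorder}) vec ^ ('n::{finite,wellorder})"
  assumes "CARD('n) \<ge> 2"
    and "invertible M"
  shows "(\<exists>L S. lorentz_matrix L \<and> symmetric_matrix S \<and> M = L ** S) \<longleftrightarrow>
         (\<exists>\<gamma>. \<gamma> ** \<gamma> = minkowski ** transpose M ** minkowski ** M) \<and>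
         (\<exists>\<gamma> S'. \<gamma> ** \<gamma> = minkowski ** transpose M ** minkowski ** M \<and>
                  symmetric_matrix S' \<and> \<gamma> = minkowski ** S')"
  (is "?polar \<longleftrightarrow> ?root \<and> ?symmetric_root")
proof
  assume ?polar
  then obtain L S where "lorentz_matrix L" "symmetric_matrix S" "M = L ** S"
    by blast
  then show "?root \<and> ?symmetric_root"
    using square_of_form_times_symmetric
    unfolding lorentz_matrix_def symmetric_matrix_def by blast
next
  let ?\<eta> = "minkowski :: real^('n::{finite,wellorder})^('n::{finite,wellorder})"
  assume "?root \<and> ?symmetric_root"
  then obtain S where root: "(?\<eta> ** S) ** (?\<eta> ** S) = ?\<eta> ** transpose M ** ?\<eta> ** M"
    and sym: "transpose S = S"
    unfolding symmetric_matrix_def by blast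
  have "?\<eta> ** ((?\<eta> ** S) ** (?\<eta> ** S)) = ?\<eta> ** (?\<eta> ** transpose M ** ?\<eta> ** M)"
    using root by simp
  then have "S ** ?\<eta> ** S = transpose M ** ?\<eta> ** M"
    by (simp only: matrix_mul_assoc minkowski_squared matrix_mul_lid)
  moreover have "invertible ?\<eta>"
    using minkowski_squared invertible_def by blast
  ultimately obtain L where "transpose L ** ?\<eta> ** L = ?\<eta>" and "M = L ** S"
    using form_isometry_factor sym assms(2) by blast
  then show ?polar
    using sym unfolding lorentz_matrix_def symmetric_matrix_def by blast
qed

end
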